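(* In the standard LLP setup, suppose $\overline{K}=\overline{K_{mc}}$ and there is no starting error in $L(G,\gamma^N_{cons})$ (i.e. $f^N_{cons}(\epsilon)\neq\emptyset$). If $N_{mcmc}$ is defined and $N\ge N_{mcmc}+1$, then $L(G,\gamma^N_{cons})=\overline{K^\uparrow}$.
   Context: Standard LLP setup. $\Sigma=\Sigma_c\,\dot\cup\,\Sigma_{uc}$ is a finite alphabet partitioned into controllable and uncontrollable events. The plant $G$ has generated language $L(G)$ and marked language $L_m(G)$ with $L(G)=\overline{L_m(G)}$ ($\overline{M}$ = set of prefixes of strings in $M$). The legal language $K\subseteq L_m(G)$ satisfies $K=\overline{K}\cap L_m(G)$ ($K$ need not be prefix-closed). For a prefix-closed $L$, $M$ is controllable w.r.t. $L$ if $\overline{M}\Sigma_{uc}\cap L\subseteq\overline{M}$; $K^\uparrow$ is the supremal sublanguage of $K$ controllable w.r.t. $L(G)$. For a language $L$ and $s\in\Sigma^*$: $L/s=\{t: st\in L\}$; $L|_N=\{t\in L:|t|\le N\}$; $\Sigma_{L(G)}(s)=\{\sigma\in\Sigma: s\sigma\in L(G)\}$. $M^{\uparrow/s|_N}$ is the supremal sublanguage of $M$ controllable w.r.t. $L(G)/s|_N$. Conservative attitude: $f^N_{cons}(s)=[K/s|_{N-1}]^{\uparrow/s|_N}$; control policy $\gamma^N_{cons}(s)=(\overline{f^N_{cons}(s)}\cap\Sigma)\cup(\Sigma_{uc}\cap\Sigma_{L(G)}(s))$. Closed-loop language $L(G,\gamma)$: $\epsilon\in L(G,\gamma)$, and $s\sigma\in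 L(G,\gamma)$ iff $s\in L(G,\gamma)$, $s\sigma\in L(G)$, $\sigma\in\gamma(s)$. Define $L_c(G)=\{s\in L(G): s\sigma\notin L(G)\ \forall\sigma\in\Sigma_{uc}\}$ and $K_{mc}=K\cap L_c(G)$. Then $N_{mcmc}=\max\{|t|: \exists s\in K_{mc}\cup\{\epsilon\},\ st\in K_{mc}\text{ and } sv\notin K_{mc}\text{ for every nonempty proper prefix } v\text{ of } t\}$ if this maximum exists; otherwise undefined. *)

theory Defs
  imports Main
begin

text \<open>The finite alphabet Sigma is the finite type 'a; Euc is the set of
  uncontrollable events, the controllable ones being its complement.\<close>

definition pref :: "'a list set \<Rightarrow> 'a list set" where
  "pref M = {s. \<exists>t. s @ t \<in> M}"

definition controllable :: "'a set \<Rightarrow> 'a list set \<Rightarrow> 'a list set \<Rightarrow> bool" where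
  "controllable Euc L M \<longleftrightarrow>
     (\<forall>s \<sigma>. s \<in> pref M \<and> \<sigma> \<in> Euc \<and> s @ [\<sigma>] \<in> L \<longrightarrow> s @ [\<sigma>] \<in> pref M)"

definition supcon :: "'a set \<Rightarrow> 'a list set \<Rightarrow> 'a list set \<Rightarrow> 'a list set" where
  "supcon Euc L M = \<Union>{M'. M' \<subseteq> M \<and> controllable Euc L M'}"

definition quot :: "'a list set \<Rightarrow> 'a list \<Rightarrow> 'a list set" where
  "quot L s = {t. s @ t \<in> L}"

definition trunc :: "'a list set \<Rightarrow> nat \<Rightarrow> 'a list set" where
  "trunc L N = {t \<in> L. length t \<le> N}"

text \<open>Conservative attitude; L is the generated language L(G).\<close>
definition f_cons :: "'a set \<Rightarrow> 'a list set \<Rightarrow> 'a list set \<Rightarrow> nat \<Rightarrow> 'a list \<Rightarrow> 'a list set" where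
  "f_cons Euc L K N s = supcon Euc (trunc (quot L s) N) (trunc (quot K s) (N - 1))"

definition gamma_cons :: "'a set \<Rightarrow> 'a list set \<Rightarrow> 'a list set \<Rightarrow> nat \<Rightarrow> 'a list \<Rightarrow> 'a set" where
  "gamma_cons Euc L K N s =
     {\<sigma>. [\<sigma>] \<in> pref (f_cons Euc L K N s)} \<union> {\<sigma> \<in> Euc. s @ [\<sigma>] \<in> L}"

inductive_set closed_loop :: "'a list set \<Rightarrow> ('a list \<Rightarrow> 'a set) \<Rightarrow> 'a list set"
  for L :: "'a list set" and \<gamma> :: "'a list \<Rightarrow> 'a set" where
  Nil: "[] \<in> closed_loop L \<gamma>"
| snoc: "s \<in> closed_loop L \<gamma> \<Longrightarrow> s @ [\<sigma>] \<in> L \<Longrightarrow> \<sigma> \<in> \<gamma> s \<Longrightarrow> s @ [\<sigma>] \<in> closed_loop L \<gamma>"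

definition Lc :: "'a set \<Rightarrow> 'a list set \<Rightarrow> 'a list set" where
  "Lc Euc L = {s \<in> L. \<forall>\<sigma> \<in> Euc. s @ [\<sigma>] \<notin> L}"

definition Kmc :: "'a set \<Rightarrow> 'a list set \<Rightarrow> 'a list set \<Rightarrow> 'a list set" where
  "Kmc Euc L K = K \<inter> Lc Euc L"

text \<open>The set of lengths over which N_mcmc is the maximum. v is a nonempty
  proper prefix of t iff v \<noteq> [], v \<noteq> t and (\<exists>w. v @ w = t).\<close>
definition mcmc_lengths :: "'a list set \<Rightarrow> nat set" where
  "mcmc_lengths M = {length t | s t. s \<in> M \<union> {[]} \<and> s @ t \<in> M \<and>
      (\<forall>v w. v @ w = t \<and> v \<noteq> [] \<and> v \<noteq> t \<longrightarrow> s @ v \<notin> M)}"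

definition is_N_mcmc :: "'a set \<Rightarrow> 'a list set \<Rightarrow> 'a list set \<Rightarrow> nat \<Rightarrow> bool" where
  "is_N_mcmc Euc L K n \<longleftrightarrow>
     n \<in> mcmc_lengths (Kmc Euc L K) \<and> (\<forall>m \<in> mcmc_lengths (Kmc Euc L K). m \<le> n)"

end

theory Submission
  imports Defs
begin

text \<open>Inclusion: each look-ahead language f(s) consists of strings shorter than N, so the window
  L(G)/s|N sees every uncontrollable continuation of them; hence s f(s) glued onto K\<up> is again a
  controllable sublanguage of K, and the closed loop never leaves the prefixes of K\<up>.
  Converse: for x a prefix of K\<up>, the continuations of x inside K\<up> that stop at the first
  string of K_mc form a controllable language, because at a string of K_mc no uncontrollable event
  is possible. Consecutive strings of K_mc along a word are at most N_mcmc apart, so these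
  continuations are shorter than N; they therefore lie in f(x) and enable every event that K\<up>
  enables after x.\<close>

lemma pref_mono: "A \<subseteq> B \<Longrightarrow> pref A \<subseteq> pref B"
  unfolding pref_def by blast

lemma pref_idem: "pref (pref A) = pref A"
  unfolding pref_def by (auto; metis append.assoc append_Nil2)

lemma pref_self: "x \<in> A \<Longrightarrow> x \<in> pref A"
  unfolding pref_def by (auto intro: exI[of _ "[]"])

lemma pref_appendD: "x @ y \<in> pref A \<Longrightarrow> x \<in> pref A"
  unfolding pref_def by auto

lemma pref_Un: "pref (A \<union> B) = pref A \<union> pref B"
  unfolding pref_def by blast

lemma pref_shift: "u \<in> pref M \<Longrightarrow> s @ u \<in> pref ((@) s ` M)"
  unfolding pref_def by auto

lemma controllable_antimono: "L' \<subseteq> L \<Longrightarrow> controllable E L M \<Longrightarrow> controllable E L' M"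
  unfolding controllable_def by blast

lemma supcon_subset: "supcon E L M \<subseteq> M"
  unfolding supcon_def by blast

lemma supcon_greatest: "M' \<subseteq> M \<Longrightarrow> controllable E L M' \<Longrightarrow> M' \<subseteq> supcon E L M"
  unfolding supcon_def by blast

lemma controllable_supcon: "controllable E L (supcon E L M)"
  unfolding controllable_def
proof (intro allI impI)
  fix s \<sigma> assume a: "s \<in> pref (supcon E L M) \<and> \<sigma> \<in> E \<and> s @ [\<sigma>] \<in> L"
  then obtain M' where M': "M' \<subseteq> M" "controllable E L M'" "s \<in> pref M'"
    unfolding supcon_def pref_def by blast
  then have "s @ [\<sigma>] \<in> pref M'" using a unfolding controllable_def by blast
  then show "s @ [\<sigma>] \<in> pref (supcon E L M)"
    using pref_mono[OF supcon_greatest[OF M'(1,2)]] by blast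
qed

text \<open>Adding to the supremal language any of its prefixes that lie in M keeps the prefix
  closure, hence controllability.\<close>
lemma pref_supcon_Int_subset:
  assumes "M' \<subseteq> M"
  shows "pref (supcon E L M) \<inter> M' \<subseteq> supcon E L M"
proof -
  let ?S = "supcon E L M"
  have "pref (pref ?S \<inter> M') \<subseteq> pref ?S"
    using pref_mono[of "pref ?S \<inter> M'" "pref ?S"] pref_idem by blast
  then have "pref (?S \<union> (pref ?S \<inter> M')) = pref ?S"
    unfolding pref_Un by blast
  then have "controllable E L (?S \<union> (pref ?S \<inter> M'))"
    using controllable_supcon unfolding controllable_def by metis
  moreover have "?S \<union> (pref ?S \<inter> M') \<subseteq> M"
    using supcon_subset assms by blast
  ultimately show ?thesis using supcon_greatest by blast
qed

lemma pref_shiftE: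
  assumes "y \<in> pref ((@) s ` M)"
  obtains w where "y @ w = s" "w \<noteq> []"
    | us z where "y = s @ us" "us @ z \<in> M"
proof -
  obtain z m where m: "m \<in> M" "y @ z = s @ m"
    using assms unfolding pref_def by blast
  then obtain us where "(y = s @ us \<and> us @ z = m) \<or> (y @ us = s \<and> z = us @ m)"
    by (auto simp: append_eq_append_conv2)
  then show thesis
  proof
    assume "y = s @ us \<and> us @ z = m"
    then show thesis using that(2) m(1) by blast
  next
    assume h: "y @ us = s \<and> z = us @ m"
    show thesis
    proof (cases "us = []")
      case True
      then show thesis using that(2)[of "[]" m] h m(1) by simp
    next
      case False
      then show thesis using that(1) h by blast
    qed
  qed
qed

lemma controllable_Un_shift:
  assumes ctrl: "controllable E L S" and s: "s \<in> pref S \<or> s = []"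
    and M: "controllable E (trunc (quot L s) N) M"
    and short: "\<And>u. u \<in> M \<Longrightarrow> length u < N"
  shows "controllable E L (S \<union> (@) s ` M)"
  unfolding controllable_def
proof (intro allI impI)
  fix y \<sigma> assume a: "y \<in> pref (S \<union> (@) s ` M) \<and> \<sigma> \<in> E \<and> y @ [\<sigma>] \<in> L"
  let ?goal = "y @ [\<sigma>] \<in> pref (S \<union> (@) s ` M)"
  have in_S: ?goal if "y \<in> pref S"
    using that ctrl a unfolding controllable_def pref_Un by blast
  have in_shift: ?goal if us: "y = s @ us" "us @ z \<in> M" for us z
  proof -
    have "us \<in> pref M" using us(2) unfolding pref_def by blast
    moreover have "us @ [\<sigma>] \<in> trunc (quot L s) N"
      using a us short[OF us(2)] unfolding trunc_def quot_def by simp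
    ultimately have "us @ [\<sigma>] \<in> pref M" using M a unfolding controllable_def by blast
    then show ?goal using pref_shift[of "us @ [\<sigma>]" M s] us(1) unfolding pref_Un by simp
  qed
  have "y \<in> pref S \<or> y \<in> pref ((@) s ` M)" using a unfolding pref_Un by blast
  then show ?goal
  proof
    assume "y \<in> pref ((@) s ` M)"
    then show ?goal
    proof (cases rule: pref_shiftE)
      case (1 w)
      then have "y \<in> pref S" using s pref_appendD by fastforce
      then show ?goal by (rule in_S)
    qed (rule in_shift)
  qed (rule in_S)
qed

lemma shift_f_cons_subset_supcon:
  assumes "s \<in> pref (supcon E L K) \<or> s = []" and "0 < N"
  shows "(@) s ` f_cons E L K N s \<subseteq> supcon E L K"
proof -
  let ?S = "supcon E L K" and ?F = "f_cons E L K N s"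
  have F: "?F \<subseteq> trunc (quot K s) (N - 1)" "controllable E (trunc (quot L s) N) ?F"
    unfolding f_cons_def by (rule supcon_subset, rule controllable_supcon)
  have "controllable E L (?S \<union> (@) s ` ?F)"
    using controllable_Un_shift[OF controllable_supcon assms(1) F(2)] F(1) \<open>0 < N\<close>
    unfolding trunc_def by fastforce
  moreover have "?S \<union> (@) s ` ?F \<subseteq> K"
    using supcon_subset F(1) unfolding trunc_def quot_def by blast
  ultimately show ?thesis using supcon_greatest by blast
qed

lemma closed_loop_subset_pref_supcon:
  assumes "0 < N" and "f_cons E L K N [] \<noteq> {}"
  shows "closed_loop L (gamma_cons E L K N) \<subseteq> pref (supcon E L K)"
proof
  fix x assume "x \<in> closed_loop L (gamma_cons E L K N)"
  then show "x \<in> pref (supcon E L K)"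
  proof (induction rule: closed_loop.induct)
    case Nil
    then obtain m where "m \<in> f_cons E L K N []" using assms(2) by blast
    then have "m \<in> supcon E L K" using shift_f_cons_subset_supcon[of "[]" E L K N] assms(1) by auto
    then show ?case using pref_appendD[of "[]" m] pref_self by auto
  next
    case (snoc s \<sigma>)
    from snoc.hyps(3) consider "[\<sigma>] \<in> pref (f_cons E L K N s)" | "\<sigma> \<in> E"
      unfolding gamma_cons_def by auto
    then show ?case
    proof cases
      case 1
      then obtain z where "\<sigma> # z \<in> f_cons E L K N s" unfolding pref_def by auto
      then have "s @ [\<sigma>] @ z \<in> supcon E L K"
        using shift_f_cons_subset_supcon[of s E L K N] snoc.IH assms(1) by auto
      then show ?thesis using pref_appendD pref_self by (metis append.assoc)
    next
      case 2
      then show ?thesis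
        using controllable_supcon[of E L K] snoc.IH snoc.hyps(2) unfolding controllable_def by blast
    qed
  qed
qed

subsection \<open>Distances between consecutive strings of a language along a word\<close>

definition avoids_inner :: "'a list set \<Rightarrow> 'a list \<Rightarrow> 'a list \<Rightarrow> bool" where
  "avoids_inner M x u \<longleftrightarrow> (\<forall>v w. v @ w = u \<and> v \<noteq> [] \<and> w \<noteq> [] \<longrightarrow> x @ v \<notin> M)"

lemma avoids_inner_appendD: "avoids_inner M x (u @ z) \<Longrightarrow> avoids_inner M x u"
  unfolding avoids_inner_def by (metis append.assoc append_is_Nil_conv)

lemma avoids_inner_snoc:
  "avoids_inner M x (u @ [c]) \<longleftrightarrow> avoids_inner M x u \<and> (u \<noteq> [] \<longrightarrow> x @ u \<notin> M)"
proof
  assume "avoids_inner M x (u @ [c])"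
  then show "avoids_inner M x u \<and> (u \<noteq> [] \<longrightarrow> x @ u \<notin> M)"
    using avoids_inner_appendD unfolding avoids_inner_def by blast
next
  assume h: "avoids_inner M x u \<and> (u \<noteq> [] \<longrightarrow> x @ u \<notin> M)"
  show "avoids_inner M x (u @ [c])"
    unfolding avoids_inner_def
  proof (intro allI impI)
    fix v w assume vw: "v @ w = u @ [c] \<and> v \<noteq> [] \<and> w \<noteq> []"
    then have "v @ butlast w = u" by (metis butlast_append butlast_snoc)
    then show "x @ v \<notin> M"
      using h vw unfolding avoids_inner_def by (cases "butlast w = []") auto
  qed
qed

lemma avoids_inner_single: "avoids_inner M x [c]"
  using avoids_inner_snoc[of M x "[]" c] unfolding avoids_inner_def by simp

lemma mcmc_lengths_take:
  assumes kj: "k < j" "j \<le> length W" and k: "take k W \<in> M \<or> k = 0" and j: "take j W \<in> M"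
    and between: "\<And>l. k < l \<Longrightarrow> l < j \<Longrightarrow> take l W \<notin> M"
  shows "j - k \<in> mcmc_lengths M"
proof -
  define t where "t = drop k (take j W)"
  have "take k (take j W) = take k W" using kj by (simp add: min_def)
  then have st: "take k W @ t = take j W" unfolding t_def by (metis append_take_drop_id)
  have len_k: "length (take k W) = k" using kj by simp
  have inner: "take k W @ v \<notin> M" if vt: "v @ w = t" "v \<noteq> []" "v \<noteq> t" for v w
  proof -
    have lv: "0 < length v" "length v < length t" using vt by auto
    have "take (k + length v) W = take (k + length v) (take j W)"
      using lv kj unfolding t_def by simp
    also have "\<dots> = take k W @ take (length v) t" using kj by (simp flip: st)
    also have "take (length v) t = v" using vt(1) by auto
    finally show ?thesis using between[of "k + length v"] lv kj unfolding t_def by auto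
  qed
  have "j - k = length t \<and> take k W \<in> M \<union> {[]} \<and> take k W @ t \<in> M \<and>
      (\<forall>v w. v @ w = t \<and> v \<noteq> [] \<and> v \<noteq> t \<longrightarrow> take k W @ v \<notin> M)"
    using kj k j st inner unfolding t_def by auto
  then show ?thesis unfolding mcmc_lengths_def by blast
qed

text \<open>With W = x u r in M, let k be the last mark within x (or 0) and j the first mark after k.
  Then j - k is a gap between consecutive marks, and avoidance forces j \<ge> |x u|.\<close>
lemma length_le_mcmc_bound:
  assumes bound: "\<forall>m \<in> mcmc_lengths M. m \<le> n"
    and xu: "x @ u \<in> pref M" and avoid: "avoids_inner M x u"
  shows "length u \<le> n"
proof (cases "u = []")
  case False
  obtain r where WM: "x @ u @ r \<in> M" using xu unfolding pref_def by auto
  define W where "W = x @ u @ r"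
  define P where "P = (\<lambda>k. k \<le> length x \<and> (take k W \<in> M \<or> k = 0))"
  define k where "k = (GREATEST k. P k)"
  have Pk: "P k" unfolding k_def by (rule GreatestI_nat[of P 0 "length x"]) (auto simp: P_def)
  have k_max: "l \<le> k" if "P l" for l
    unfolding k_def by (rule Greatest_le_nat[of P l "length x"]) (use that in \<open>auto simp: P_def\<close>)
  define Q where "Q = (\<lambda>j. k < j \<and> take j W \<in> M)"
  have k_le: "k \<le> length x" using Pk unfolding P_def by simp
  have QW: "Q (length W)" using WM k_le False unfolding Q_def W_def by (cases u) auto
  define j where "j = (LEAST j. Q j)"
  have Qj: "Q j" unfolding j_def by (rule LeastI[of Q, OF QW])
  have j_min: "\<not> Q l" if "l < j" for l using not_less_Least[of l Q] that j_def by blast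
  have jW: "j \<le> length W" using Least_le[of Q, OF QW] j_def by simp
  have "j - k \<in> mcmc_lengths M"
    using mcmc_lengths_take[of k j W M] Pk Qj jW j_min unfolding P_def Q_def by blast
  then have "j - k \<le> n" using bound by blast
  moreover have "length x + length u \<le> j"
  proof (rule ccontr)
    assume j_short: "\<not> length x + length u \<le> j"
    show False
    proof (cases "j \<le> length x")
      case True
      then have "P j" using Qj unfolding Q_def P_def W_def by simp
      then show False using k_max Qj unfolding Q_def by fastforce
    next
      case False
      define v where "v = take (j - length x) u"
      have "take j W = x @ v" using False j_short unfolding W_def v_def by simp
      moreover have "v @ drop (j - length x) u = u" "v \<noteq> []" "drop (j - length x) u \<noteq> []"
        using False j_short unfolding v_def by auto
      ultimately show False using avoid Qj unfolding avoids_inner_def Q_def by metis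
    qed
  qed
  ultimately show ?thesis using k_le by simp
qed simp

definition conts_to_mark :: "'a list set \<Rightarrow> 'a list set \<Rightarrow> 'a list \<Rightarrow> 'a list set" where
  "conts_to_mark M S x = {u. avoids_inner M x u \<and> x @ u \<in> S}"

lemma pref_conts_to_mark:
  assumes hit: "pref S \<inter> M \<subseteq> S"
  shows "x @ u @ w \<in> S \<Longrightarrow> u \<noteq> [] \<Longrightarrow> avoids_inner M x u \<Longrightarrow> u \<in> pref (conts_to_mark M S x)"
proof (induction w arbitrary: u)
  case Nil
  then have "u \<in> conts_to_mark M S x" unfolding conts_to_mark_def by simp
  then show ?case by (rule pref_self)
next
  case (Cons c w)
  show ?case
  proof (cases "x @ u \<in> M")
    case True
    have "x @ u \<in> pref S" using Cons.prems(1) pref_self pref_appendD by (metis append.assoc)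
    then have "u \<in> conts_to_mark M S x"
      using True hit Cons.prems(3) unfolding conts_to_mark_def by blast
    then show ?thesis by (rule pref_self)
  next
    case False
    then have "avoids_inner M x (u @ [c])" using Cons.prems(3) by (simp add: avoids_inner_snoc)
    moreover have "x @ (u @ [c]) @ w \<in> S" using Cons.prems(1) by simp
    ultimately have "u @ [c] \<in> pref (conts_to_mark M S x)" using Cons.IH[of "u @ [c]"] by simp
    then show ?thesis by (rule pref_appendD)
  qed
qed

lemma controllable_conts_to_mark:
  assumes ctrl: "controllable E L S" and M: "M \<subseteq> Lc E L" and hit: "pref S \<inter> M \<subseteq> S"
  shows "controllable E (quot L x) (conts_to_mark M S x)"
  unfolding controllable_def
proof (intro allI impI)
  fix u \<sigma> assume a: "u \<in> pref (conts_to_mark M S x) \<and> \<sigma> \<in> E \<and> u @ [\<sigma>] \<in> quot L x"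
  then obtain z where z: "avoids_inner M x (u @ z)" "x @ u @ z \<in> S"
    unfolding pref_def conts_to_mark_def by auto
  have L: "(x @ u) @ [\<sigma>] \<in> L" using a unfolding quot_def by simp
  then have "x @ u \<notin> M" using a M unfolding Lc_def by blast
  then have avoid: "avoids_inner M x (u @ [\<sigma>])"
    using avoids_inner_appendD[OF z(1)] by (simp add: avoids_inner_snoc)
  have "(x @ u) @ z \<in> pref S" using z(2) pref_self by simp
  then have "x @ u \<in> pref S" by (rule pref_appendD)
  then have "(x @ u) @ [\<sigma>] \<in> pref S"
    using ctrl a L unfolding controllable_def by blast
  then obtain w where "x @ (u @ [\<sigma>]) @ w \<in> S" unfolding pref_def by fastforce
  then show "u @ [\<sigma>] \<in> pref (conts_to_mark M S x)"
    using pref_conts_to_mark[OF hit, of x "u @ [\<sigma>]" w] avoid by simp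
qed

lemma snoc_pref_supcon_in_f_cons:
  assumes MK: "M \<subseteq> K" and M_Lc: "M \<subseteq> Lc E L" and pref_M: "pref (supcon E L K) \<subseteq> pref M"
    and bound: "\<forall>m \<in> mcmc_lengths M. m \<le> n" and "n < N"
    and x\<sigma>: "x @ [\<sigma>] \<in> pref (supcon E L K)"
  shows "[\<sigma>] \<in> pref (f_cons E L K N x)"
proof -
  let ?S = "supcon E L K"
  let ?R = "conts_to_mark M ?S x"
  have hit: "pref ?S \<inter> M \<subseteq> ?S" using pref_supcon_Int_subset[OF MK] .
  have "?R \<subseteq> trunc (quot K x) (N - 1)"
  proof
    fix u assume u: "u \<in> ?R"
    then have xu: "x @ u \<in> ?S" and avoid: "avoids_inner M x u" unfolding conts_to_mark_def by auto
    have "x @ u \<in> K" using xu supcon_subset by blast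
    moreover have "x @ u \<in> pref M" using pref_self[OF xu] pref_M by blast
    then have "length u \<le> n" using length_le_mcmc_bound[OF bound _ avoid] by blast
    ultimately show "u \<in> trunc (quot K x) (N - 1)"
      using \<open>n < N\<close> unfolding trunc_def quot_def by simp
  qed
  moreover have "controllable E (trunc (quot L x) N) ?R"
    using controllable_conts_to_mark[OF controllable_supcon M_Lc hit]
    by (rule controllable_antimono[rotated]) (auto simp: trunc_def)
  ultimately have "?R \<subseteq> f_cons E L K N x" unfolding f_cons_def by (rule supcon_greatest)
  moreover have "[\<sigma>] \<in> pref ?R"
  proof -
    obtain w where "x @ [\<sigma>] @ w \<in> ?S" using x\<sigma> unfolding pref_def by auto
    then show ?thesis
      using pref_conts_to_mark[OF hit, of x "[\<sigma>]" w] avoids_inner_single[of M x \<sigma>] by simp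
  qed
  ultimately show ?thesis using pref_mono by blast
qed

lemma pref_supcon_subset_closed_loop:
  assumes "pref (supcon E L K) \<subseteq> L"
    and enabled: "\<And>x \<sigma>. x @ [\<sigma>] \<in> pref (supcon E L K) \<Longrightarrow> [\<sigma>] \<in> pref (f_cons E L K N x)"
  shows "pref (supcon E L K) \<subseteq> closed_loop L (gamma_cons E L K N)"
proof
  fix x assume "x \<in> pref (supcon E L K)"
  then show "x \<in> closed_loop L (gamma_cons E L K N)"
  proof (induction x rule: rev_induct)
    case Nil
    show ?case by (rule closed_loop.Nil)
  next
    case (snoc \<sigma> x)
    then have "x \<in> closed_loop L (gamma_cons E L K N)" using pref_appendD by blast
    moreover have "x @ [\<sigma>] \<in> L" using snoc.prems assms(1) by blast
    moreover have "\<sigma> \<in> gamma_cons E L K N x"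
      using enabled[OF snoc.prems] unfolding gamma_cons_def by blast
    ultimately show ?case by (rule closed_loop.snoc)
  qed
qed

theorem theorem12:
  fixes Euc :: "'a::finite set" and Lm K :: "'a list set" and N n :: nat
  defines "L \<equiv> pref Lm"
  assumes K_sub: "K \<subseteq> Lm"
    and K_closed: "K = pref K \<inter> Lm"
    and K_mc: "pref K = pref (Kmc Euc L K)"
    and no_start_err: "f_cons Euc L K N [] \<noteq> {}"
    and N_def: "is_N_mcmc Euc L K n"
    and N_ge: "N \<ge> n + 1"
  shows "closed_loop L (gamma_cons Euc L K N) = pref (supcon Euc L K)"
proof
  show "closed_loop L (gamma_cons Euc L K N) \<subseteq> pref (supcon Euc L K)"
    using closed_loop_subset_pref_supcon[OF _ no_start_err] N_ge by simp
  have "pref (supcon Euc L K) \<subseteq> pref K" using supcon_subset pref_mono by blast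
  then have pref_L: "pref (supcon Euc L K) \<subseteq> L"
    and pref_Kmc: "pref (supcon Euc L K) \<subseteq> pref (Kmc Euc L K)"
    using K_sub pref_mono K_mc unfolding L_def by blast+
  have "Kmc Euc L K \<subseteq> K" and "Kmc Euc L K \<subseteq> Lc Euc L" unfolding Kmc_def by auto
  moreover have "\<forall>m \<in> mcmc_lengths (Kmc Euc L K). m \<le> n"
    using N_def unfolding is_N_mcmc_def by blast
  ultimately show "pref (supcon Euc L K) \<subseteq> closed_loop L (gamma_cons Euc L K N)"
    using pref_supcon_subset_closed_loop[OF pref_L] snoc_pref_supcon_in_f_cons[OF _ _ pref_Kmc]
      N_ge by simp
qed

end
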